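(* Consider a matched pair study and suppose the statistic $t(\cdot,\cdot)$ is effect increasing or differential increasing. If the bounded null $\overline H_0$ holds, then for every $\alpha\in(0,1)$ (with $\overline p_{\Gamma_0;k}$ computed from $q_{ij}=q_{ij}(Y)$ and $T=t(Z,Y)$): (i) for each $k$, $\{\Gamma_0\in[1,\infty]:\overline p_{\Gamma_0;k}>\alpha\}$ is a $1-\alpha$ confidence set for $\Gamma^\star_{(k)}$; (ii) for each $\Gamma_0$, $\{I-k:\overline p_{\Gamma_0;k}>\alpha,\ 0\le k\le I\}$ is a $1-\alpha$ confidence set for $I^\star(\Gamma_0)$; and (iii) these are simultaneously valid: $\mathbb P\big(\Gamma^\star\in\bigcap_{(\Gamma_0,k):\overline p_{\Gamma_0;k}\le\alpha}\mathcal S_{\Gamma_0;k}^c\big)\ge1-\alpha$.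
   Context: Setting: $I$ matched pairs; potential outcomes fixed; $Z\in\mathcal Z=\{z\in\{0,1\}^{2I}:z_{i1}+z_{i2}=1\ \forall i\}$ random with true mechanism $\mathbb P(Z=z)=\prod_i\prod_j(p^\star_{ij})^{z_{ij}}$; $\Gamma^\star_i=\max_jp^\star_{ij}/\min_kp^\star_{ik}\in[1,\infty]$, $\Gamma^\star_{(k)}$ its $k$th smallest, $I^\star(\Gamma_0)=\#\{i:\Gamma^\star_i>\Gamma_0\}$, $\mathcal S_{\Gamma_0;k}=\{\Gamma\in[1,\infty]^I:\Gamma_{(k)}\le\Gamma_0\}$ ($\Gamma_{(k)}$ = $k$th smallest coordinate), complement in $[1,\infty]^I$. $Y=Z\circ Y(1)+(1-Z)\circ Y(0)$. $\overline H_0$: $Y_{ij}(1)\le Y_{ij}(0)$ for all $i,j$. $t(z,y)=\sum_i\sum_jz_{ij}q_{ij}(y)$. Effect increasing: $t(z,y+z\circ\eta+(1-z)\circ\xi)\ge t(z,y)$ for $z\in\mathcal Z$, $\eta\succcurlyeq0\succcurlyeq\xi$. Differential increasing: $t(z,y+a\circ\eta)-t(z,y)\le t(a,y+a\circ\eta)-t(a,y)$ for $z,a\in\mathcal Z$, $\eta\succcurlyeq0$. With $q_{ij}=q_{ij}(Y)$, fix an ordering by nondecreasing $|q_{i1}-q_{i2}|$ and let $\mathcal I_k$ be the first $k$ pairs; $\overline T(\Gamma_0;k)$ is a sum of independent variables equal, for $i\in\mathcal I_k$, to $\max\{q_{i1},q_{i2}\}$ w.p. $\Gamma_0/(1+\Gamma_0)$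 and $\min\{q_{i1},q_{i2}\}$ otherwise, and for $i\notin\mathcal I_k$ to $\max\{q_{i1},q_{i2}\}$; $\overline p_{\Gamma_0;k}=\mathbb P(\overline T(\Gamma_0;k)\ge c)|_{c=T}$, and $\overline p_{\Gamma_0;0}=1$. *)

theory Defs
  imports Complex_Main "HOL-Library.Extended_Real"
begin

text \<open>Matched pairs: pairs i < I, units j \<in> {0,1} (paper: j \<in> {1,2}).
  Vectors in R^{2I} are functions nat \<Rightarrow> nat \<Rightarrow> real vanishing outside the index range.\<close>

definition Vspace :: "nat \<Rightarrow> (nat \<Rightarrow> nat \<Rightarrow> real) set" where
  "Vspace I = {y. \<forall>i j. (I \<le> i \<or> 2 \<le> j) \<longrightarrow> y i j = 0}"

definition Zset :: "nat \<Rightarrow> (nat \<Rightarrow> nat \<Rightarrow> real) set" where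
  "Zset I = {z. z \<in> Vspace I \<and> (\<forall>i<I. \<forall>j<2. z i j \<in> {0, 1}) \<and> (\<forall>i<I. z i 0 + z i 1 = 1)}"

definition assign_prob :: "nat \<Rightarrow> (nat \<Rightarrow> nat \<Rightarrow> real) \<Rightarrow> (nat \<Rightarrow> nat \<Rightarrow> real) \<Rightarrow> real" where
  "assign_prob I p z = (\<Prod>i<I. \<Prod>j<2. if z i j = 1 then p i j else 1)"

definition Prob :: "nat \<Rightarrow> (nat \<Rightarrow> nat \<Rightarrow> real) \<Rightarrow> ((nat \<Rightarrow> nat \<Rightarrow> real) \<Rightarrow> bool) \<Rightarrow> real" where
  "Prob I p E = (\<Sum>z \<in> {z \<in> Zset I. E z}. assign_prob I p z)"

definition gamma_star :: "(nat \<Rightarrow> nat \<Rightarrow> real) \<Rightarrow> nat \<Rightarrow> ereal" where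
  "gamma_star p i = (if min (p i 0) (p i 1) = 0 then \<infinity>
     else ereal (max (p i 0) (p i 1) / min (p i 0) (p i 1)))"

definition kth_smallest :: "nat \<Rightarrow> (nat \<Rightarrow> ereal) \<Rightarrow> nat \<Rightarrow> ereal" where
  "kth_smallest I g k = sort (map g [0..<I]) ! (k - 1)"

definition I_star :: "nat \<Rightarrow> (nat \<Rightarrow> nat \<Rightarrow> real) \<Rightarrow> ereal \<Rightarrow> nat" where
  "I_star I p \<Gamma>0 = card {i \<in> {..<I}. gamma_star p i > \<Gamma>0}"

definition Gspace :: "nat \<Rightarrow> (nat \<Rightarrow> ereal) set" where
  "Gspace I = {\<Gamma>. \<forall>i<I. 1 \<le> \<Gamma> i}"

definition Sset :: "nat \<Rightarrow> ereal \<Rightarrow> nat \<Rightarrow> (nat \<Rightarrow> ereal) set" where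
  "Sset I \<Gamma>0 k = {\<Gamma> \<in> Gspace I. kth_smallest I \<Gamma> k \<le> \<Gamma>0}"

definition tstat :: "nat \<Rightarrow> ((nat \<Rightarrow> nat \<Rightarrow> real) \<Rightarrow> nat \<Rightarrow> nat \<Rightarrow> real)
    \<Rightarrow> (nat \<Rightarrow> nat \<Rightarrow> real) \<Rightarrow> (nat \<Rightarrow> nat \<Rightarrow> real) \<Rightarrow> real" where
  "tstat I q z y = (\<Sum>i<I. \<Sum>j<2. z i j * q y i j)"

definition effect_increasing :: "nat \<Rightarrow> ((nat \<Rightarrow> nat \<Rightarrow> real) \<Rightarrow> nat \<Rightarrow> nat \<Rightarrow> real) \<Rightarrow> bool" where
  "effect_increasing I q \<longleftrightarrow>
    (\<forall>z \<in> Zset I. \<forall>y \<in> Vspace I. \<forall>\<eta> \<in> Vspace I. \<forall>\<xi> \<in> Vspace I.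
      (\<forall>i j. 0 \<le> \<eta> i j) \<longrightarrow> (\<forall>i j. \<xi> i j \<le> 0) \<longrightarrow>
      tstat I q z (\<lambda>i j. y i j + z i j * \<eta> i j + (1 - z i j) * \<xi> i j) \<ge> tstat I q z y)"

definition differential_increasing :: "nat \<Rightarrow> ((nat \<Rightarrow> nat \<Rightarrow> real) \<Rightarrow> nat \<Rightarrow> nat \<Rightarrow> real) \<Rightarrow> bool" where
  "differential_increasing I q \<longleftrightarrow>
    (\<forall>z \<in> Zset I. \<forall>a \<in> Zset I. \<forall>y \<in> Vspace I. \<forall>\<eta> \<in> Vspace I.
      (\<forall>i j. 0 \<le> \<eta> i j) \<longrightarrow>
      tstat I q z (\<lambda>i j. y i j + a i j * \<eta> i j) - tstat I q z y
        \<le> tstat I q a (\<lambda>i j. y i j + a i j * \<eta> i j) - tstat I q a y)"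

definition Yobs :: "(nat \<Rightarrow> nat \<Rightarrow> real) \<Rightarrow> (nat \<Rightarrow> nat \<Rightarrow> real) \<Rightarrow> (nat \<Rightarrow> nat \<Rightarrow> real)
    \<Rightarrow> nat \<Rightarrow> nat \<Rightarrow> real" where
  "Yobs Y1 Y0 z = (\<lambda>i j. z i j * Y1 i j + (1 - z i j) * Y0 i j)"

definition sorts_pairs :: "nat \<Rightarrow> (nat \<Rightarrow> nat \<Rightarrow> real) \<Rightarrow> (nat \<Rightarrow> nat) \<Rightarrow> bool" where
  "sorts_pairs I qv \<pi> \<longleftrightarrow> bij_betw \<pi> {..<I} {..<I} \<and>
     (\<forall>a b. a \<le> b \<longrightarrow> b < I \<longrightarrow>
        \<bar>qv (\<pi> a) 0 - qv (\<pi> a) 1\<bar> \<le> \<bar>qv (\<pi> b) 0 - qv (\<pi> b) 1\<bar>)"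

definition theta :: "ereal \<Rightarrow> real" where
  "theta \<Gamma>0 = (if \<Gamma>0 = \<infinity> then 1 else real_of_ereal \<Gamma>0 / (1 + real_of_ereal \<Gamma>0))"

text \<open>P(Tbar(Gamma0;k) \<ge> c): Tbar is a sum of independent variables; for i in I_k it equals
  max{q_i1,q_i2} w.p. theta and min{q_i1,q_i2} otherwise (B = set of pairs taking the max),
  for i not in I_k it equals max{q_i1,q_i2}.\<close>
definition Tbar_tail :: "nat \<Rightarrow> (nat \<Rightarrow> nat \<Rightarrow> real) \<Rightarrow> (nat \<Rightarrow> nat) \<Rightarrow> ereal \<Rightarrow> nat \<Rightarrow> real \<Rightarrow> real" where
  "Tbar_tail I qv \<pi> \<Gamma>0 k c =
    (let Ik = \<pi> ` {..<k}; \<theta> = theta \<Gamma>0 in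
     \<Sum>B \<in> Pow Ik. \<theta> ^ card B * (1 - \<theta>) ^ card (Ik - B) *
       (if (\<Sum>i\<in>B. max (qv i 0) (qv i 1)) + (\<Sum>i\<in>Ik - B. min (qv i 0) (qv i 1))
           + (\<Sum>i\<in>{..<I} - Ik. max (qv i 0) (qv i 1)) \<ge> c then 1 else 0))"

definition pbar :: "nat \<Rightarrow> (nat \<Rightarrow> nat \<Rightarrow> real) \<Rightarrow> (nat \<Rightarrow> nat) \<Rightarrow> ereal \<Rightarrow> nat \<Rightarrow> real \<Rightarrow> real" where
  "pbar I qv \<pi> \<Gamma>0 k c = (if k = 0 then 1 else Tbar_tail I qv \<pi> \<Gamma>0 k c)"

definition pbar_obs :: "nat \<Rightarrow> ((nat \<Rightarrow> nat \<Rightarrow> real) \<Rightarrow> nat \<Rightarrow> nat \<Rightarrow> real)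
    \<Rightarrow> ((nat \<Rightarrow> nat \<Rightarrow> real) \<Rightarrow> nat \<Rightarrow> nat)
    \<Rightarrow> (nat \<Rightarrow> nat \<Rightarrow> real) \<Rightarrow> (nat \<Rightarrow> nat \<Rightarrow> real) \<Rightarrow> (nat \<Rightarrow> nat \<Rightarrow> real)
    \<Rightarrow> ereal \<Rightarrow> nat \<Rightarrow> real" where
  "pbar_obs I q ord Y1 Y0 z \<Gamma>0 k =
    (let y = Yobs Y1 Y0 z; qv = q y in pbar I qv (ord qv) \<Gamma>0 k (tstat I q z y))"

end

theory Submission
  imports Defs
begin

text \<open>Under the bounded null the observed statistic is stochastically dominated by its
  randomization distribution: for a suitable comparison statistic s (t(\<cdot>,Y) if t is effect
  increasing, t(\<cdot>,Y(0)) if it is differential increasing), s(Z) \<le> s(a) forces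
  t(Z,Y) \<le> t(a,Y). Hence the tail probability P_a(t(a,Y) \<ge> T) is at least the exact p-value
  P_a(s(a) \<ge> s(Z)), which exceeds \<alpha> with probability at least 1 - \<alpha>.
  Under the true mechanism t(a,Y) is a constant plus a sum of independent weighted Bernoulli
  variables with weights |q_i1 - q_i2|. If at least k pairs have \<Gamma>*_i \<le> \<Gamma>0, the success
  probabilities of those pairs are at most \<Gamma>0/(1+\<Gamma>0); raising them to this bound and all
  other probabilities to 1, and then moving the k uncertain pairs to the k smallest weights,
  only increases the tail, which turns it into the tail of \<open>Tbar(\<Gamma>0;k)\<close>. So with probability
  at least 1 - \<alpha>, \<open>pbar(\<Gamma>0;k) > \<alpha>\<close> simultaneously for all (\<Gamma>0,k) with
  k \<le> #{i. \<Gamma>*_i \<le> \<Gamma>0}, and all three confidence statements follow deterministically.\<close>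

section \<open>Tails of weighted sums of independent Bernoulli variables\<close>

definition bernoulli_tail :: "nat set \<Rightarrow> (nat \<Rightarrow> real) \<Rightarrow> (nat \<Rightarrow> real) \<Rightarrow> real \<Rightarrow> real" where
  "bernoulli_tail S r d c =
     (\<Sum>B\<in>Pow S. (\<Prod>i\<in>S. if i \<in> B then r i else 1 - r i) * (if c \<le> sum d B then 1 else 0))"

lemma bernoulli_tail_empty [simp]: "bernoulli_tail {} r d c = (if c \<le> 0 then 1 else 0)"
  by (simp add: bernoulli_tail_def)

lemma bernoulli_tail_insert:
  assumes "finite S" "i \<notin> S"
  shows "bernoulli_tail (insert i S) r d c
    = r i * bernoulli_tail S r d (c - d i) + (1 - r i) * bernoulli_tail S r d c"
proof -
  define W where "W B = (\<Prod>x\<in>insert i S. if x \<in> B then r x else 1 - r x) *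
    (if c \<le> sum d B then 1 else 0)" for B
  have disj: "Pow S \<inter> insert i ` Pow S = {}" using assms by auto
  have inj: "inj_on (insert i) (Pow S)"
    by (rule inj_onI) (metis Pow_iff assms(2) insert_ident subsetD)
  have "bernoulli_tail (insert i S) r d c = sum W (Pow S) + sum (W \<circ> insert i) (Pow S)"
    unfolding bernoulli_tail_def W_def Pow_insert
    using assms disj inj by (simp add: sum.union_disjoint sum.reindex)
  also have "sum (W \<circ> insert i) (Pow S) = r i * bernoulli_tail S r d (c - d i)"
    unfolding bernoulli_tail_def sum_distrib_left
  proof (rule sum.cong[OF refl])
    fix B assume "B \<in> Pow S"
    then have B: "finite B" "i \<notin> B" using assms finite_subset by auto
    have "(\<Prod>x\<in>S. if x \<in> insert i B then r x else 1 - r x) = (\<Prod>x\<in>S. if x \<in> B then r x else 1 - r x)"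
      using assms(2) by (intro prod.cong) auto
    then show "(W \<circ> insert i) B = r i * ((\<Prod>x\<in>S. if x \<in> B then r x else 1 - r x) *
        (if c - d i \<le> sum d B then 1 else 0))"
      unfolding W_def comp_def using assms B by (simp add: algebra_simps)
  qed
  also have "sum W (Pow S) = (1 - r i) * bernoulli_tail S r d c"
    unfolding bernoulli_tail_def sum_distrib_left
    using assms by (intro sum.cong refl) (auto simp: W_def algebra_simps)
  finally show ?thesis by simp
qed

lemma bernoulli_tail_cong:
  assumes "\<forall>i\<in>S. r i = r' i"
  shows "bernoulli_tail S r d c = bernoulli_tail S r' d c"
  unfolding bernoulli_tail_def using assms
  by (intro sum.cong refl arg_cong2[where f="(*)"] prod.cong) auto

lemma bernoulli_tail_antimono:
  assumes "\<forall>i\<in>S. 0 \<le> r i \<and> r i \<le> 1" "c \<le> c'"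
  shows "bernoulli_tail S r d c' \<le> bernoulli_tail S r d c"
  unfolding bernoulli_tail_def
proof (rule sum_mono)
  fix B
  have "0 \<le> (\<Prod>i\<in>S. if i \<in> B then r i else 1 - r i)"
    using assms(1) by (intro prod_nonneg) auto
  then show "(\<Prod>i\<in>S. if i \<in> B then r i else 1 - r i) * (if c' \<le> sum d B then 1 else 0)
    \<le> (\<Prod>i\<in>S. if i \<in> B then r i else 1 - r i) * (if c \<le> sum d B then 1 else 0)"
    using assms(2) by (intro mult_left_mono) auto
qed

lemma bernoulli_tail_zero_weights:
  assumes "finite S"
  shows "bernoulli_tail S r (\<lambda>_. 0) 0 = 1"
  using assms by induction (simp_all add: bernoulli_tail_insert)

lemma bernoulli_tail_certain:
  assumes "finite D" "finite A" "A \<inter> D = {}" "\<forall>i\<in>D. r i = 1"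
  shows "bernoulli_tail (A \<union> D) r d c = bernoulli_tail A r d (c - sum d D)"
  using assms
proof (induction D arbitrary: c rule: finite_induct)
  case empty then show ?case by simp
next
  case (insert x F)
  then have "bernoulli_tail (insert x (A \<union> F)) r d c = bernoulli_tail A r d (c - d x - sum d F)"
    by (simp add: bernoulli_tail_insert)
  then show ?case using insert by (simp add: algebra_simps)
qed

lemma bernoulli_tail_const:
  assumes "finite A"
  shows "bernoulli_tail A (\<lambda>_. \<theta>) d c =
    (\<Sum>B\<in>Pow A. \<theta> ^ card B * (1 - \<theta>) ^ card (A - B) * (if c \<le> sum d B then 1 else 0))"
  unfolding bernoulli_tail_def
proof (intro sum.cong refl arg_cong2[where f="(*)"])
  fix B assume B: "B \<in> Pow A"
  have "(\<Prod>i\<in>A. if i \<in> B then \<theta> else 1 - \<theta>) =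
      prod (\<lambda>_. \<theta>) (A \<inter> {x. x \<in> B}) * prod (\<lambda>_. 1 - \<theta>) (A \<inter> - {x. x \<in> B})"
    using assms by (rule prod.If_cases)
  then show "(\<Prod>i\<in>A. if i \<in> B then \<theta> else 1 - \<theta>) = \<theta> ^ card B * (1 - \<theta>) ^ card (A - B)"
    using B by (simp add: Int_absorb1 Diff_eq Int_commute)
qed

lemma mixture_mono:
  fixes a b u v :: real
  assumes "a \<le> b" "u \<le> v"
  shows "a * v + (1 - a) * u \<le> b * v + (1 - b) * u"
proof -
  have "0 \<le> (b - a) * (v - u)" using assms by simp
  then show ?thesis by (simp add: algebra_simps)
qed

lemma bernoulli_tail_mono_probs:
  assumes "finite S" "\<forall>i\<in>S. 0 \<le> r i \<and> r i \<le> r' i \<and> r' i \<le> 1" "\<forall>i\<in>S. 0 \<le> d i"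
  shows "bernoulli_tail S r d c \<le> bernoulli_tail S r' d c"
  using assms
proof (induction S arbitrary: c rule: finite_induct)
  case empty then show ?case by simp
next
  case (insert x F)
  let ?T = "bernoulli_tail F r d" and ?T' = "bernoulli_tail F r' d"
  have IH: "?T c' \<le> ?T' c'" for c' using insert by simp
  have "r x * ?T (c - d x) + (1 - r x) * ?T c \<le> r x * ?T' (c - d x) + (1 - r x) * ?T' c"
    using insert.prems IH by (intro add_mono mult_left_mono) auto
  also have "\<dots> \<le> r' x * ?T' (c - d x) + (1 - r' x) * ?T' c"
    using insert by (intro mixture_mono bernoulli_tail_antimono) auto
  finally show ?case using insert by (simp add: bernoulli_tail_insert)
qed

definition worst_case_probs :: "nat set \<Rightarrow> real \<Rightarrow> nat \<Rightarrow> real" where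
  "worst_case_probs A \<theta> i = (if i \<in> A then \<theta> else 1)"

lemma bernoulli_tail_worst_case_insert:
  assumes "finite S" "j \<notin> S"
  shows "bernoulli_tail (insert j S) (worst_case_probs (insert j A) \<theta>) d c
    = \<theta> * bernoulli_tail S (worst_case_probs A \<theta>) d (c - d j)
      + (1 - \<theta>) * bernoulli_tail S (worst_case_probs A \<theta>) d c"
proof -
  have "bernoulli_tail S (worst_case_probs (insert j A) \<theta>) d c' = bernoulli_tail S (worst_case_probs A \<theta>) d c'"
    for c' using assms(2) by (intro bernoulli_tail_cong) (auto simp: worst_case_probs_def)
  then show ?thesis using assms by (simp add: bernoulli_tail_insert worst_case_probs_def)
qed

lemma bernoulli_tail_worst_case_insert_certain:
  assumes "finite S" "j \<notin> S" "j \<notin> A"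
  shows "bernoulli_tail (insert j S) (worst_case_probs A \<theta>) d c
    = bernoulli_tail S (worst_case_probs A \<theta>) d (c - d j)"
  using assms by (simp add: bernoulli_tail_insert worst_case_probs_def)

text \<open>Exchanging an uncertain unit l for a certain one j of smaller weight can only
  increase the tail: the pair then contributes d_j + d_l or d_l instead of d_j + d_l or d_j.\<close>

lemma bernoulli_tail_worst_case_exchange:
  assumes S: "finite S" "j \<notin> S" "l \<in> S" "l \<notin> A"
    and d: "d j \<le> d l" and \<theta>: "0 \<le> \<theta>" "\<theta> \<le> 1"
  shows "bernoulli_tail S (worst_case_probs (insert l A) \<theta>) d (c - d j)
    \<le> bernoulli_tail (insert j S) (worst_case_probs (insert j A) \<theta>) d c"
proof -
  define S' where "S' = S - {l}"
  let ?U = "bernoulli_tail S' (worst_case_probs A \<theta>) d"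
  have S_eq: "S = insert l S'" and S': "finite S'" "l \<notin> S'" using S unfolding S'_def by auto
  have "?U (c - d j) \<le> ?U (c - d l)"
    using d \<theta> by (intro bernoulli_tail_antimono) (auto simp: worst_case_probs_def)
  then have "\<theta> * ?U (c - d j - d l) + (1 - \<theta>) * ?U (c - d j)
      \<le> \<theta> * ?U (c - d j - d l) + (1 - \<theta>) * ?U (c - d l)"
    using \<theta> by (simp add: mult_left_mono)
  then show ?thesis
    using S S' unfolding S_eq
    by (simp add: bernoulli_tail_worst_case_insert bernoulli_tail_worst_case_insert_certain
        algebra_simps)
qed

lemma nth_notin_set_take:
  assumes "distinct xs" "n < length xs"
  shows "xs ! n \<notin> set (take n xs)"
proof -
  have "distinct (take (Suc n) xs)" using assms by simp
  then show ?thesis using assms by (simp add: take_Suc_conv_app_nth)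
qed

lemma bernoulli_tail_insert_le_certain:
  assumes "finite S" "j \<notin> S" "0 \<le> r j" "r j \<le> 1" "\<forall>i\<in>S. 0 \<le> r i \<and> r i \<le> 1" "0 \<le> d j"
  shows "bernoulli_tail (insert j S) r d c \<le> bernoulli_tail S r d (c - d j)"
proof -
  let ?T = "bernoulli_tail S r d"
  have "r j * ?T (c - d j) + (1 - r j) * ?T c \<le> 1 * ?T (c - d j) + (1 - 1) * ?T c"
    using assms by (intro mixture_mono bernoulli_tail_antimono) auto
  then show ?thesis using assms by (simp add: bernoulli_tail_insert)
qed

lemma bernoulli_tail_insert_le_worst_case:
  assumes S: "finite S" "j \<notin> S"
    and le: "\<And>c'. bernoulli_tail S r d c' \<le> bernoulli_tail S (worst_case_probs A \<theta>) d c'"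
    and r: "0 \<le> r j" "r j \<le> \<theta>" "\<theta> \<le> 1" and "0 \<le> d j"
  shows "bernoulli_tail (insert j S) r d c \<le> bernoulli_tail (insert j S) (worst_case_probs (insert j A) \<theta>) d c"
proof -
  let ?T = "bernoulli_tail S r d" and ?T' = "bernoulli_tail S (worst_case_probs A \<theta>) d"
  have "bernoulli_tail (insert j S) r d c = r j * ?T (c - d j) + (1 - r j) * ?T c"
    by (rule bernoulli_tail_insert[OF S])
  also have "\<dots> \<le> r j * ?T' (c - d j) + (1 - r j) * ?T' c"
    using le r by (intro add_mono mult_left_mono) auto
  also have "\<dots> \<le> \<theta> * ?T' (c - d j) + (1 - \<theta>) * ?T' c"
    using assms by (intro mixture_mono bernoulli_tail_antimono) (auto simp: worst_case_probs_def)
  also have "\<dots> = bernoulli_tail (insert j S) (worst_case_probs (insert j A) \<theta>) d c"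
    by (rule bernoulli_tail_worst_case_insert[OF S, symmetric])
  finally show ?thesis .
qed

text \<open>The induction walks along the pairs in order of increasing weight: an uncertain
  pair (r_j \<le> \<theta>) is raised to \<theta>; a certain one is raised to 1 and, if still
  uncertain pairs are owed, exchanged against the k-th pair of the remaining list.\<close>

lemma bernoulli_tail_le_worst_case:
  fixes xs :: "nat list"
  assumes "distinct xs" "sorted_wrt (\<lambda>x y. d x \<le> d y) xs"
    "\<forall>i\<in>set xs. 0 \<le> r i \<and> r i \<le> 1" "\<forall>i\<in>set xs. 0 \<le> d i"
    "0 \<le> \<theta>" "\<theta> \<le> 1" "k \<le> card {i\<in>set xs. r i \<le> \<theta>}"
  shows "bernoulli_tail (set xs) r d c \<le> bernoulli_tail (set xs) (worst_case_probs (set (take k xs)) \<theta>) d c"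
  using assms
proof (induction xs arbitrary: k c)
  case Nil then show ?case by simp
next
  case (Cons j xs)
  let ?S = "set xs" and ?good = "\<lambda>A. {i\<in>A. r i \<le> \<theta>}"
  have S: "finite ?S" "j \<notin> ?S" using Cons.prems by auto
  have IH: "k' \<le> card (?good ?S) \<Longrightarrow>
      bernoulli_tail ?S r d c' \<le> bernoulli_tail ?S (worst_case_probs (set (take k' xs)) \<theta>) d c'"
    for k' c' using Cons by simp
  consider "k = 0" | k' where "k = Suc k'" "r j \<le> \<theta>" | "0 < k" "\<theta> < r j"
    by (cases k) force+
  then show ?case
  proof cases
    case 1
    then show ?thesis using Cons.prems
      by (intro bernoulli_tail_mono_probs) (auto simp: worst_case_probs_def)
  next
    case (2 k')
    then have "?good (set (j # xs)) = insert j (?good ?S)" by auto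
    then show ?thesis using IH[of k'] Cons.prems 2 S
      by (simp add: bernoulli_tail_insert_le_worst_case)
  next
    case 3
    then have "?good (set (j # xs)) = ?good ?S" by auto
    then have k: "k \<le> card (?good ?S)" using Cons.prems by simp
    also have "\<dots> \<le> length xs"
      using card_length[of xs] card_mono[OF S(1), of "?good ?S"] by auto
    finally have "k - 1 < length xs" using 3 by simp
    define l where "l = xs ! (k - 1)"
    define A where "A = set (take (k - 1) xs)"
    have l: "l \<in> ?S" "l \<notin> A" "d j \<le> d l"
      using Cons.prems nth_notin_set_take \<open>k - 1 < length xs\<close> unfolding l_def A_def by auto
    have take_k: "set (take k xs) = insert l A" "set (take k (j # xs)) = insert j A"
      using \<open>k - 1 < length xs\<close> 3 take_Suc_conv_app_nth[of "k - 1" xs]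
      unfolding l_def A_def by (cases k; simp)+
    have "bernoulli_tail (set (j # xs)) r d c \<le> bernoulli_tail ?S r d (c - d j)"
      using bernoulli_tail_insert_le_certain[OF S, of r d c] Cons.prems by simp
    also have "\<dots> \<le> bernoulli_tail ?S (worst_case_probs (insert l A) \<theta>) d (c - d j)"
      using IH[OF k] take_k by simp
    also have "\<dots> \<le> bernoulli_tail (set (j # xs)) (worst_case_probs (set (take k (j # xs))) \<theta>) d c"
      using S l Cons.prems take_k by (simp add: bernoulli_tail_worst_case_exchange)
    finally show ?thesis .
  qed
qed

section \<open>Assignments and their probabilities\<close>

text \<open>Given a choice h i \<in> {0,1} of one unit per pair, every assignment is determined by
  the set B of pairs in which unit h i is the treated one.\<close>

definition assignment :: "nat \<Rightarrow> (nat \<Rightarrow> nat) \<Rightarrow> nat set \<Rightarrow> nat \<Rightarrow> nat \<Rightarrow> real" where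
  "assignment I h B i j = (if i < I \<and> j < 2 then (if (i \<in> B) = (j = h i) then 1 else 0) else 0)"

lemma assignment_in_Zset:
  assumes "\<forall>i. h i < 2"
  shows "assignment I h B \<in> Zset I"
proof -
  have "assignment I h B i 0 + assignment I h B i 1 = 1" if "i < I" for i
    using assms[rule_format, of i] that by (cases "h i") (auto simp: assignment_def)
  then show ?thesis unfolding Zset_def Vspace_def by (auto simp: assignment_def)
qed

lemma inj_on_assignment:
  assumes "\<forall>i. h i < 2"
  shows "inj_on (assignment I h) (Pow {..<I})"
proof (rule inj_onI)
  fix B B' assume B: "B \<in> Pow {..<I}" "B' \<in> Pow {..<I}" and eq: "assignment I h B = assignment I h B'"
  have "i \<in> B \<longleftrightarrow> i \<in> B'" if "i < I" for i
    using fun_cong[OF fun_cong[OF eq, of i], of "h i"] assms that by (auto simp: assignment_def split: if_splits)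
  then show "B = B'" using B by blast
qed

lemma Zset_eq_image_assignment:
  assumes h: "\<forall>i. h i < 2"
  shows "Zset I = assignment I h ` Pow {..<I}"
proof
  show "assignment I h ` Pow {..<I} \<subseteq> Zset I" using assignment_in_Zset[OF h] by auto
  show "Zset I \<subseteq> assignment I h ` Pow {..<I}"
  proof
    fix z assume z: "z \<in> Zset I"
    define B where "B = {i. i < I \<and> z i (h i) = 1}"
    have "z i j = assignment I h B i j" for i j
    proof (cases "i < I \<and> j < 2")
      case True
      then have "z i 0 \<in> {0,1}" "z i 1 \<in> {0,1}" "z i 0 + z i 1 = 1" using z by (auto simp: Zset_def)
      then have "(z i 0 = 0 \<and> z i 1 = 1) \<or> (z i 0 = 1 \<and> z i 1 = 0)" "h i = 0 \<or> h i = 1" "j = 0 \<or> j = 1"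
        using True h[rule_format, of i] by auto
      then show ?thesis using True by (elim disjE conjE; simp add: assignment_def B_def)
    next
      case False
      then show ?thesis using z by (auto simp: assignment_def Zset_def Vspace_def)
    qed
    moreover have "B \<in> Pow {..<I}" by (auto simp: B_def)
    ultimately show "z \<in> assignment I h ` Pow {..<I}" by blast
  qed
qed

lemma finite_Zset: "finite (Zset I)"
  using Zset_eq_image_assignment[of "\<lambda>_. 0" I] by simp

lemma Prob_eq_sum_Pow:
  assumes "\<forall>i. h i < 2"
  shows "Prob I p E = (\<Sum>B\<in>Pow {..<I}. assign_prob I p (assignment I h B) * (if E (assignment I h B) then 1 else 0))"
proof -
  have "Prob I p E = (\<Sum>z\<in>Zset I. if E z then assign_prob I p z else 0)"
    unfolding Prob_def using finite_Zset by (rule sum.inter_filter)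
  also have "\<dots> = (\<Sum>B\<in>Pow {..<I}. if E (assignment I h B) then assign_prob I p (assignment I h B) else 0)"
    unfolding Zset_eq_image_assignment[OF assms] using inj_on_assignment[OF assms] by (simp add: sum.reindex)
  finally show ?thesis by (simp add: if_distrib cong: if_cong)
qed

lemma assign_prob_assignment:
  assumes "\<forall>i. h i < 2"
  shows "assign_prob I p (assignment I h B) = (\<Prod>i<I. if i \<in> B then p i (h i) else p i (1 - h i))"
  unfolding assign_prob_def
proof (rule prod.cong[OF refl])
  fix i assume i: "i \<in> {..<I}"
  have "h i = 0 \<or> h i = 1" using assms[rule_format, of i] by auto
  then show "(\<Prod>j<2. if assignment I h B i j = 1 then p i j else 1) = (if i \<in> B then p i (h i) else p i (1 - h i))"
    using i by (auto simp: assignment_def numeral_2_eq_2 lessThan_Suc)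
qed

lemma assign_prob_nonneg:
  assumes "\<forall>i<I. \<forall>j<2. 0 \<le> p i j"
  shows "0 \<le> assign_prob I p z"
  unfolding assign_prob_def using assms by (intro prod_nonneg) auto

lemma Prob_mono:
  assumes "\<forall>i<I. \<forall>j<2. 0 \<le> p i j" "\<forall>z\<in>Zset I. E z \<longrightarrow> E' z"
  shows "Prob I p E \<le> Prob I p E'"
  unfolding Prob_def using assms finite_Zset assign_prob_nonneg[OF assms(1)]
  by (intro sum_mono2) auto

lemma Prob_True:
  assumes "\<forall>i<I. p i 0 + p i 1 = 1"
  shows "Prob I p (\<lambda>_. True) = 1"
proof -
  have h: "\<forall>i. (\<lambda>_. 0::nat) i < 2" by simp
  have "Prob I p (\<lambda>_. True) = (\<Sum>B\<in>Pow {..<I}. (\<Prod>i<I. if i \<in> B then p i 0 else p i 1))"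
    unfolding Prob_eq_sum_Pow[OF h] assign_prob_assignment[OF h] diff_zero by simp
  also have "\<dots> = (\<Sum>B\<in>Pow {..<I}. (\<Prod>i<I. if i \<in> B then p i 0 else 1 - p i 0))"
  proof (intro sum.cong refl prod.cong)
    fix B i assume "i \<in> {..<I}"
    then have "p i 0 + p i 1 = 1" using assms by simp
    then show "(if i \<in> B then p i 0 else p i 1) = (if i \<in> B then p i 0 else 1 - p i 0)"
      by simp
  qed
  also have "\<dots> = bernoulli_tail {..<I} (\<lambda>i. p i 0) (\<lambda>_. 0) 0"
    unfolding bernoulli_tail_def by simp
  finally show ?thesis by (simp add: bernoulli_tail_zero_weights)
qed

lemma Prob_not:
  assumes "\<forall>i<I. p i 0 + p i 1 = 1"
  shows "Prob I p (\<lambda>z. \<not> E z) = 1 - Prob I p E"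
proof -
  have "Prob I p (\<lambda>_. True) = sum (assign_prob I p) ({z\<in>Zset I. E z} \<union> {z\<in>Zset I. \<not> E z})"
    unfolding Prob_def by (intro sum.cong) auto
  also have "\<dots> = Prob I p E + Prob I p (\<lambda>z. \<not> E z)"
    unfolding Prob_def using finite_Zset by (intro sum.union_disjoint) auto
  finally show ?thesis using Prob_True[OF assms] by simp
qed

lemma Prob_le_1:
  assumes "\<forall>i<I. \<forall>j<2. 0 \<le> p i j" "\<forall>i<I. p i 0 + p i 1 = 1"
  shows "Prob I p E \<le> 1"
  using Prob_mono[OF assms(1), of E "\<lambda>_. True"] Prob_True[OF assms(2)] by simp

text \<open>Validity of the exact p-value z \<mapsto> P(s(Z) \<ge> s(z)): if the event is nonempty, it is
  contained in {s \<ge> s z0} for a minimiser z0 of s over it, whose probability is at most \<alpha>.\<close>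

lemma Prob_pvalue_le:
  fixes s :: "(nat \<Rightarrow> nat \<Rightarrow> real) \<Rightarrow> real"
  assumes "\<forall>i<I. \<forall>j<2. 0 \<le> p i j" "0 \<le> \<alpha>"
  shows "Prob I p (\<lambda>z. Prob I p (\<lambda>a. s z \<le> s a) \<le> \<alpha>) \<le> \<alpha>"
proof -
  define V where "V = {z\<in>Zset I. Prob I p (\<lambda>a. s z \<le> s a) \<le> \<alpha>}"
  show ?thesis
  proof (cases "V = {}")
    case True
    have "Prob I p (\<lambda>z. Prob I p (\<lambda>a. s z \<le> s a) \<le> \<alpha>) = sum (assign_prob I p) V"
      unfolding V_def Prob_def ..
    then show ?thesis using assms(2) True by simp
  next
    case False
    have "finite V" unfolding V_def using finite_Zset by simp
    then have "Min (s ` V) \<in> s ` V" using False by (intro Min_in) auto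
    then obtain z0 where "z0 \<in> V" "s z0 = Min (s ` V)" by auto
    with \<open>finite V\<close> have z0: "z0 \<in> V" "\<forall>z\<in>V. s z0 \<le> s z" by auto
    then have "Prob I p (\<lambda>z. Prob I p (\<lambda>a. s z \<le> s a) \<le> \<alpha>) \<le> Prob I p (\<lambda>z. s z0 \<le> s z)"
      using assms(1) unfolding V_def by (intro Prob_mono) auto
    also have "\<dots> \<le> \<alpha>" using z0 unfolding V_def by simp
    finally show ?thesis .
  qed
qed

section \<open>The randomization distribution of the statistic\<close>

definition larger_unit :: "(nat \<Rightarrow> nat \<Rightarrow> real) \<Rightarrow> nat \<Rightarrow> nat" where
  "larger_unit qv i = (if qv i 0 < qv i 1 then 1 else 0)"

lemma tstat_assignment_larger_unit:
  assumes "B \<subseteq> {..<I}"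
  shows "tstat I q (assignment I (larger_unit (q y)) B) y
    = (\<Sum>i<I. min (q y i 0) (q y i 1)) + (\<Sum>i\<in>B. \<bar>q y i 0 - q y i 1\<bar>)"
proof -
  let ?m = "\<lambda>i. min (q y i 0) (q y i 1)" and ?d = "\<lambda>i. \<bar>q y i 0 - q y i 1\<bar>"
  have "tstat I q (assignment I (larger_unit (q y)) B) y = (\<Sum>i<I. ?m i + (if i \<in> B then ?d i else 0))"
    unfolding tstat_def
    by (intro sum.cong refl) (auto simp: assignment_def larger_unit_def numeral_2_eq_2 lessThan_Suc)
  also have "\<dots> = (\<Sum>i<I. ?m i) + (\<Sum>i<I. if i \<in> B then ?d i else 0)"
    by (simp add: sum.distrib)
  also have "(\<Sum>i<I. if i \<in> B then ?d i else 0) = sum ?d ({..<I} \<inter> B)"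
    by (rule sum.inter_restrict[OF finite_lessThan, symmetric])
  finally show ?thesis using assms by (simp add: Int_absorb1)
qed

lemma Prob_tstat_ge_eq_bernoulli_tail:
  assumes "\<forall>i<I. p i 0 + p i 1 = 1"
  shows "Prob I p (\<lambda>a. c \<le> tstat I q a y) =
    bernoulli_tail {..<I} (\<lambda>i. p i (larger_unit (q y) i)) (\<lambda>i. \<bar>q y i 0 - q y i 1\<bar>)
      (c - (\<Sum>i<I. min (q y i 0) (q y i 1)))"
proof -
  have h: "\<forall>i. larger_unit (q y) i < 2" by (simp add: larger_unit_def)
  show ?thesis
    unfolding Prob_eq_sum_Pow[OF h] assign_prob_assignment[OF h] bernoulli_tail_def
  proof (intro sum.cong refl arg_cong2[where f="(*)"] prod.cong)
    fix B i assume "B \<in> Pow {..<I}" "i \<in> {..<I}"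
    then show "(if i \<in> B then p i (larger_unit (q y) i) else p i (1 - larger_unit (q y) i)) =
      (if i \<in> B then p i (larger_unit (q y) i) else 1 - p i (larger_unit (q y) i))"
      using assms by (auto simp: larger_unit_def algebra_simps)
  next
    fix B assume "B \<in> Pow {..<I}"
    then show "(if c \<le> tstat I q (assignment I (larger_unit (q y)) B) y then 1 else 0) =
      (if c - (\<Sum>i<I. min (q y i 0) (q y i 1)) \<le> (\<Sum>i\<in>B. \<bar>q y i 0 - q y i 1\<bar>) then 1 else (0::real))"
      using tstat_assignment_larger_unit[of B I q y] by auto
  qed
qed

lemma Tbar_tail_eq_bernoulli_tail:
  assumes "bij_betw \<pi> {..<I} {..<I}" "k \<le> I"
  shows "Tbar_tail I qv \<pi> \<Gamma>0 k c =
    bernoulli_tail {..<I} (worst_case_probs (\<pi> ` {..<k}) (theta \<Gamma>0)) (\<lambda>i. \<bar>qv i 0 - qv i 1\<bar>)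
      (c - (\<Sum>i<I. min (qv i 0) (qv i 1)))"
proof -
  define Ik where "Ik = \<pi> ` {..<k}"
  define D where "D = {..<I} - Ik"
  define \<theta> where "\<theta> = theta \<Gamma>0"
  let ?m = "\<lambda>i. min (qv i 0) (qv i 1)" and ?d = "\<lambda>i. \<bar>qv i 0 - qv i 1\<bar>"
  have "Ik \<subseteq> {..<I}" unfolding Ik_def using assms bij_betw_imp_surj_on by fastforce
  then have U: "{..<I} = Ik \<union> D" "Ik \<inter> D = {}" and fin: "finite Ik" "finite D"
    unfolding D_def by (auto intro: finite_subset)
  have "bernoulli_tail {..<I} (worst_case_probs Ik \<theta>) ?d (c - sum ?m {..<I})
      = bernoulli_tail Ik (worst_case_probs Ik \<theta>) ?d (c - sum ?m {..<I} - sum ?d D)"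
    unfolding U(1) using fin U by (intro bernoulli_tail_certain) (auto simp: worst_case_probs_def)
  also have "\<dots> = bernoulli_tail Ik (\<lambda>_. \<theta>) ?d (c - sum ?m {..<I} - sum ?d D)"
    by (intro bernoulli_tail_cong) (auto simp: worst_case_probs_def)
  also have "\<dots> = Tbar_tail I qv \<pi> \<Gamma>0 k c"
    unfolding bernoulli_tail_const[OF fin(1)] Tbar_tail_def Let_def
      Ik_def[symmetric] \<theta>_def[symmetric] D_def[symmetric]
  proof (intro sum.cong refl arg_cong2[where f="(*)"])
    fix B assume "B \<in> Pow Ik"
    then have "sum ?m Ik = sum ?m (Ik - B) + sum ?m B"
      using fin by (simp add: sum.subset_diff)
    moreover have "sum ?m {..<I} = sum ?m Ik + sum ?m D"
      unfolding U(1) using U fin by (simp add: sum.union_disjoint)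
    moreover have "max (qv i 0) (qv i 1) = ?m i + ?d i" for i by (simp add: max_def min_def)
    ultimately show "(if c - sum ?m {..<I} - sum ?d D \<le> sum ?d B then 1 else 0) =
      (if c \<le> (\<Sum>i\<in>B. max (qv i 0) (qv i 1)) + (\<Sum>i\<in>Ik - B. ?m i) +
           (\<Sum>i\<in>D. max (qv i 0) (qv i 1)) then 1 else (0::real))"
      by (simp add: sum.distrib)
  qed
  finally show ?thesis unfolding Ik_def \<theta>_def by simp
qed

lemma theta_nonneg_le_1:
  assumes "1 \<le> \<Gamma>0"
  shows "0 \<le> theta \<Gamma>0 \<and> theta \<Gamma>0 \<le> 1"
  using assms by (cases \<Gamma>0) (auto simp: theta_def)

lemma one_le_gamma_star:
  assumes "0 \<le> p i 0" "0 \<le> p i 1"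
  shows "1 \<le> gamma_star p i"
proof (cases "min (p i 0) (p i 1) = 0")
  case False
  then have "0 < min (p i 0) (p i 1)" using assms by linarith
  then have "1 \<le> max (p i 0) (p i 1) / min (p i 0) (p i 1)" by simp
  then show ?thesis using False by (simp add: gamma_star_def)
qed (simp add: gamma_star_def)

lemma prob_le_theta_if_gamma_star_le:
  assumes p: "0 \<le> p i 0" "0 \<le> p i 1" "p i 0 + p i 1 = 1"
    and h: "h < 2" and \<Gamma>: "gamma_star p i \<le> \<Gamma>0" "1 \<le> \<Gamma>0"
  shows "p i h \<le> theta \<Gamma>0"
proof -
  let ?M = "max (p i 0) (p i 1)" and ?m = "min (p i 0) (p i 1)"
  have ph: "p i h \<le> ?M" using h by (cases h) auto
  show ?thesis
  proof (cases \<Gamma>0)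
    case (real g)
    then have "?m \<noteq> 0" using \<Gamma>(1) by (auto simp: gamma_star_def)
    then have "0 < ?m" using p by linarith
    have "?M / ?m \<le> g" using \<Gamma>(1) real \<open>?m \<noteq> 0\<close> by (simp add: gamma_star_def)
    then have "?M \<le> g * ?m" using \<open>0 < ?m\<close> by (simp add: divide_le_eq)
    moreover have "?m = 1 - ?M" using p(3) by (simp add: max_def min_def)
    ultimately have "?M \<le> g * (1 - ?M)" by simp
    then have "?M \<le> g / (1 + g)" using \<Gamma>(2) real by (simp add: le_divide_eq algebra_simps)
    then have "p i h \<le> g / (1 + g)" using ph by linarith
    then show ?thesis using real by (simp add: theta_def)
  qed (use \<Gamma> ph p in \<open>auto simp: theta_def\<close>)
qed

lemma kth_smallest_in_image:
  assumes "1 \<le> k" "k \<le> I"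
  shows "kth_smallest I g k \<in> g ` {..<I}"
proof -
  have "sort (map g [0..<I]) ! (k - 1) \<in> set (sort (map g [0..<I]))"
    using assms by (intro nth_mem) simp
  then show ?thesis unfolding kth_smallest_def by auto
qed

lemma k_le_card_le_kth_smallest:
  fixes g :: "nat \<Rightarrow> ereal"
  assumes "1 \<le> k" "k \<le> I"
  shows "k \<le> card {i\<in>{..<I}. g i \<le> kth_smallest I g k}"
proof -
  define L where "L = sort (map g [0..<I])"
  define v where "v = kth_smallest I g k"
  have L: "length L = I" "sorted L" and v: "v = L ! (k - 1)"
    unfolding L_def v_def kth_smallest_def by simp_all
  have "card {i\<in>{..<I}. g i \<le> v} = length (filter (\<lambda>i. g i \<le> v) [0..<I])"
    by (subst distinct_card[symmetric]) (auto intro: arg_cong[where f=card])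
  also have "\<dots> = length (filter (\<lambda>x. x \<le> v) L)"
    unfolding L_def by (simp add: filter_sort filter_map comp_def)
  finally have card: "card {i\<in>{..<I}. g i \<le> v} = length (filter (\<lambda>x. x \<le> v) L)" .
  have "\<forall>x\<in>set (take k L). x \<le> v"
    using assms L unfolding v by (auto simp: in_set_conv_nth intro!: sorted_nth_mono) linarith+
  then have "k = length (filter (\<lambda>x. x \<le> v) (take k L))"
    using assms L by (simp add: min_def)
  also have "\<dots> \<le> length (filter (\<lambda>x. x \<le> v) L)"
    by (metis append_take_drop_id filter_append le_add1 length_append)
  finally show ?thesis using card unfolding v_def by simp
qed

lemma Prob_tstat_ge_le_pbar:
  assumes p: "\<forall>i<I. \<forall>j<2. 0 \<le> p i j" "\<forall>i<I. p i 0 + p i 1 = 1"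
    and \<pi>: "sorts_pairs I (q y) \<pi>" and k: "k \<le> I" "k \<le> card {i\<in>{..<I}. gamma_star p i \<le> \<Gamma>0}"
    and \<Gamma>: "1 \<le> \<Gamma>0"
  shows "Prob I p (\<lambda>a. c \<le> tstat I q a y) \<le> pbar I (q y) \<pi> \<Gamma>0 k c"
proof (cases "k = 0")
  case True
  then show ?thesis using Prob_le_1[OF p] by (simp add: pbar_def)
next
  case False
  let ?r = "\<lambda>i. p i (larger_unit (q y) i)" and ?d = "\<lambda>i. \<bar>q y i 0 - q y i 1\<bar>"
    and ?c = "c - (\<Sum>i<I. min (q y i 0) (q y i 1))"
  define xs where "xs = map \<pi> [0..<I]"
  have bij: "bij_betw \<pi> {..<I} {..<I}" using \<pi> by (simp add: sorts_pairs_def)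
  then have xs: "set xs = {..<I}" "distinct xs" "set (take k xs) = \<pi> ` {..<k}"
    unfolding xs_def using k(1)
    by (auto simp: bij_betw_def distinct_map atLeast0LessThan take_map min_def)
  have "sorted_wrt (\<lambda>x y. ?d x \<le> ?d y) xs"
    unfolding xs_def sorted_wrt_map using \<pi>
    by (intro sorted_wrt_mono_rel[OF _ sorted_wrt_upt[of 0 I]]) (auto simp: sorts_pairs_def)
  moreover have "\<forall>i\<in>set xs. 0 \<le> ?r i \<and> ?r i \<le> 1"
  proof
    fix i assume "i \<in> set xs"
    then have "0 \<le> p i 0" "0 \<le> p i 1" "p i 0 + p i 1 = 1" using p xs(1) by auto
    then show "0 \<le> ?r i \<and> ?r i \<le> 1" by (auto simp: larger_unit_def)
  qed
  moreover have "k \<le> card {i\<in>set xs. ?r i \<le> theta \<Gamma>0}"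
  proof -
    have "?r i \<le> theta \<Gamma>0" if "i < I" "gamma_star p i \<le> \<Gamma>0" for i
      using p that \<Gamma> by (intro prob_le_theta_if_gamma_star_le) (simp_all add: larger_unit_def)
    then have "{i\<in>{..<I}. gamma_star p i \<le> \<Gamma>0} \<subseteq> {i\<in>set xs. ?r i \<le> theta \<Gamma>0}"
      using xs(1) by auto
    then have "card {i\<in>{..<I}. gamma_star p i \<le> \<Gamma>0} \<le> card {i\<in>set xs. ?r i \<le> theta \<Gamma>0}"
      by (intro card_mono) auto
    then show ?thesis using k(2) by linarith
  qed
  ultimately have "bernoulli_tail (set xs) ?r ?d ?c
      \<le> bernoulli_tail (set xs) (worst_case_probs (set (take k xs)) (theta \<Gamma>0)) ?d ?c"
    using xs(2) theta_nonneg_le_1[OF \<Gamma>] by (intro bernoulli_tail_le_worst_case) auto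
  then show ?thesis
    using False xs Prob_tstat_ge_eq_bernoulli_tail[OF p(2)] Tbar_tail_eq_bernoulli_tail[OF bij k(1)]
    by (simp add: pbar_def)
qed

section \<open>The bounded null hypothesis\<close>

lemma Zset_entry_bounds:
  assumes "z \<in> Zset I"
  shows "0 \<le> z i j \<and> z i j \<le> 1"
proof (cases "i < I \<and> j < 2")
  case True
  then have "z i j = 0 \<or> z i j = 1" using assms by (simp add: Zset_def)
  then show ?thesis by auto
qed (use assms in \<open>auto simp: Zset_def Vspace_def\<close>)

lemma Vspace_le_everywhere:
  assumes "Y1 \<in> Vspace I" "Y0 \<in> Vspace I" "\<forall>i<I. \<forall>j<2. Y1 i j \<le> Y0 i j"
  shows "Y1 i j \<le> Y0 i j"
  using assms by (cases "i < I \<and> j < 2") (auto simp: Vspace_def)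

lemma Yobs_in_Vspace:
  assumes "Y1 \<in> Vspace I" "Y0 \<in> Vspace I"
  shows "Yobs Y1 Y0 z \<in> Vspace I"
  using assms by (auto simp: Vspace_def Yobs_def)

text \<open>Y(z) arises from Y(a) by raising the outcomes of the units treated under a and lowering
  those of its controls.\<close>

lemma effect_increasing_tstat_le:
  assumes q: "effect_increasing I q"
    and Y: "Y1 \<in> Vspace I" "Y0 \<in> Vspace I" "\<forall>i<I. \<forall>j<2. Y1 i j \<le> Y0 i j"
    and za: "z \<in> Zset I" "a \<in> Zset I"
  shows "tstat I q a (Yobs Y1 Y0 a) \<le> tstat I q a (Yobs Y1 Y0 z)"
proof -
  define \<eta> where "\<eta> i j = (1 - z i j) * (Y0 i j - Y1 i j)" for i j
  define \<xi> where "\<xi> i j = z i j * (Y1 i j - Y0 i j)" for i j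
  have "\<eta> \<in> Vspace I" "\<xi> \<in> Vspace I" using Y unfolding \<eta>_def \<xi>_def Vspace_def by auto
  moreover have "\<forall>i j. 0 \<le> \<eta> i j" "\<forall>i j. \<xi> i j \<le> 0"
    unfolding \<eta>_def \<xi>_def using Zset_entry_bounds[OF za(1)] Vspace_le_everywhere[OF Y]
    by (auto intro!: mult_nonneg_nonneg mult_nonneg_nonpos)
  ultimately have "tstat I q a (Yobs Y1 Y0 a)
      \<le> tstat I q a (\<lambda>i j. Yobs Y1 Y0 a i j + a i j * \<eta> i j + (1 - a i j) * \<xi> i j)"
    using q za(2) Yobs_in_Vspace[OF Y(1,2)] unfolding effect_increasing_def by blast
  also have "(\<lambda>i j. Yobs Y1 Y0 a i j + a i j * \<eta> i j + (1 - a i j) * \<xi> i j) = Yobs Y1 Y0 z"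
    unfolding \<eta>_def \<xi>_def Yobs_def by (intro ext) (simp add: algebra_simps)
  finally show ?thesis .
qed

text \<open>Y(0) arises from Y(z) by raising the outcomes of the units treated under z.\<close>

lemma differential_increasing_tstat_le:
  assumes q: "differential_increasing I q"
    and Y: "Y1 \<in> Vspace I" "Y0 \<in> Vspace I" "\<forall>i<I. \<forall>j<2. Y1 i j \<le> Y0 i j"
    and za: "z \<in> Zset I" "a \<in> Zset I"
    and le: "tstat I q z Y0 \<le> tstat I q a Y0"
  shows "tstat I q z (Yobs Y1 Y0 z) \<le> tstat I q a (Yobs Y1 Y0 z)"
proof -
  define \<eta> where "\<eta> i j = Y0 i j - Y1 i j" for i j
  have "\<eta> \<in> Vspace I" using Y unfolding \<eta>_def Vspace_def by auto
  moreover have "\<forall>i j. 0 \<le> \<eta> i j" unfolding \<eta>_def using Vspace_le_everywhere[OF Y] by auto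
  ultimately have "tstat I q a (\<lambda>i j. Yobs Y1 Y0 z i j + z i j * \<eta> i j) - tstat I q a (Yobs Y1 Y0 z)
      \<le> tstat I q z (\<lambda>i j. Yobs Y1 Y0 z i j + z i j * \<eta> i j) - tstat I q z (Yobs Y1 Y0 z)"
    using q za Yobs_in_Vspace[OF Y(1,2)] unfolding differential_increasing_def by blast
  also have "(\<lambda>i j. Yobs Y1 Y0 z i j + z i j * \<eta> i j) = Y0"
    unfolding \<eta>_def Yobs_def by (intro ext) (simp add: algebra_simps)
  finally show ?thesis using le by linarith
qed

lemma exists_comparison_statistic:
  assumes Y: "Y1 \<in> Vspace I" "Y0 \<in> Vspace I" "\<forall>i<I. \<forall>j<2. Y1 i j \<le> Y0 i j"
    and q: "effect_increasing I q \<or> differential_increasing I q"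
  shows "\<exists>s :: (nat \<Rightarrow> nat \<Rightarrow> real) \<Rightarrow> real. \<forall>z\<in>Zset I. \<forall>a\<in>Zset I.
    s z \<le> s a \<longrightarrow> tstat I q z (Yobs Y1 Y0 z) \<le> tstat I q a (Yobs Y1 Y0 z)"
proof (cases "effect_increasing I q")
  case True
  have "\<forall>z\<in>Zset I. \<forall>a\<in>Zset I. tstat I q z (Yobs Y1 Y0 z) \<le> tstat I q a (Yobs Y1 Y0 a) \<longrightarrow>
      tstat I q z (Yobs Y1 Y0 z) \<le> tstat I q a (Yobs Y1 Y0 z)"
  proof (intro ballI impI)
    fix z a assume "z \<in> Zset I" "a \<in> Zset I"
      and "tstat I q z (Yobs Y1 Y0 z) \<le> tstat I q a (Yobs Y1 Y0 a)"
    then show "tstat I q z (Yobs Y1 Y0 z) \<le> tstat I q a (Yobs Y1 Y0 z)"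
      using effect_increasing_tstat_le[OF True Y, of z a] by linarith
  qed
  then show ?thesis by (intro exI[where x="\<lambda>a. tstat I q a (Yobs Y1 Y0 a)"])
next
  case False
  then have "differential_increasing I q" using q by simp
  have "\<forall>z\<in>Zset I. \<forall>a\<in>Zset I. tstat I q z Y0 \<le> tstat I q a Y0 \<longrightarrow>
      tstat I q z (Yobs Y1 Y0 z) \<le> tstat I q a (Yobs Y1 Y0 z)"
    using differential_increasing_tstat_le[OF \<open>differential_increasing I q\<close> Y] by blast
  then show ?thesis by (intro exI[where x="\<lambda>a. tstat I q a Y0"])
qed

definition covers :: "nat \<Rightarrow> (nat \<Rightarrow> ereal) \<Rightarrow> real \<Rightarrow> (ereal \<Rightarrow> nat \<Rightarrow> real) \<Rightarrow> bool" where
  "covers I g \<alpha> P \<longleftrightarrow>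
    (\<forall>\<Gamma>0 k. 1 \<le> \<Gamma>0 \<longrightarrow> k \<le> I \<longrightarrow> k \<le> card {i\<in>{..<I}. g i \<le> \<Gamma>0} \<longrightarrow> \<alpha> < P \<Gamma>0 k)"

lemma Prob_covers_pbar_obs:
  assumes p: "\<forall>i<I. \<forall>j<2. 0 \<le> p i j" "\<forall>i<I. p i 0 + p i 1 = 1"
    and Y: "Y1 \<in> Vspace I" "Y0 \<in> Vspace I" "\<forall>i<I. \<forall>j<2. Y1 i j \<le> Y0 i j"
    and q: "effect_increasing I q \<or> differential_increasing I q"
    and ord: "\<forall>qv. sorts_pairs I qv (ord qv)" and \<alpha>: "0 \<le> \<alpha>"
  shows "1 - \<alpha> \<le> Prob I p (\<lambda>z. covers I (gamma_star p) \<alpha> (pbar_obs I q ord Y1 Y0 z))"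
proof -
  obtain s :: "(nat \<Rightarrow> nat \<Rightarrow> real) \<Rightarrow> real" where s: "\<forall>z\<in>Zset I. \<forall>a\<in>Zset I.
      s z \<le> s a \<longrightarrow> tstat I q z (Yobs Y1 Y0 z) \<le> tstat I q a (Yobs Y1 Y0 z)"
    using exists_comparison_statistic[OF Y q] by blast
  let ?F = "\<lambda>z. Prob I p (\<lambda>a. s z \<le> s a)"
  have "covers I (gamma_star p) \<alpha> (pbar_obs I q ord Y1 Y0 z)" if z: "z \<in> Zset I" "\<alpha> < ?F z" for z
    unfolding covers_def
  proof (intro allI impI)
    fix \<Gamma>0 k assume "1 \<le> \<Gamma>0" "k \<le> I" "k \<le> card {i\<in>{..<I}. gamma_star p i \<le> \<Gamma>0}"
    define y where "y = Yobs Y1 Y0 z"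
    have "?F z \<le> Prob I p (\<lambda>a. tstat I q z y \<le> tstat I q a y)"
      unfolding y_def using s z p(1) by (intro Prob_mono) auto
    also have "\<dots> \<le> pbar_obs I q ord Y1 Y0 z \<Gamma>0 k"
      unfolding pbar_obs_def y_def[symmetric] Let_def
      using ord \<open>1 \<le> \<Gamma>0\<close> \<open>k \<le> I\<close> \<open>k \<le> card _\<close> by (intro Prob_tstat_ge_le_pbar[OF p]) auto
    finally show "\<alpha> < pbar_obs I q ord Y1 Y0 z \<Gamma>0 k" using z(2) by linarith
  qed
  then have "Prob I p (\<lambda>z. \<alpha> < ?F z) \<le> Prob I p (\<lambda>z. covers I (gamma_star p) \<alpha> (pbar_obs I q ord Y1 Y0 z))"
    using p(1) by (intro Prob_mono) auto
  moreover have "Prob I p (\<lambda>z. \<alpha> < ?F z) = 1 - Prob I p (\<lambda>z. ?F z \<le> \<alpha>)"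
    using Prob_not[OF p(2), of "\<lambda>z. ?F z \<le> \<alpha>"] by (simp add: not_le)
  ultimately show ?thesis using Prob_pvalue_le[OF p(1) \<alpha>, of s] by linarith
qed

lemma covers_kth_smallest:
  assumes "covers I g \<alpha> P" "\<forall>i<I. 1 \<le> g i" "k \<in> {1..I}"
  shows "kth_smallest I g k \<in> {\<Gamma>0. 1 \<le> \<Gamma>0 \<and> \<alpha> < P \<Gamma>0 k}"
  using assms kth_smallest_in_image[of k I g] k_le_card_le_kth_smallest[of k I g]
  unfolding covers_def by auto

lemma covers_I_star:
  assumes "covers I (gamma_star p) \<alpha> P" "1 \<le> \<Gamma>0"
  shows "I_star I p \<Gamma>0 \<in> {I - k | k. k \<le> I \<and> \<alpha> < P \<Gamma>0 k}"
proof -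
  define A where "A = {i\<in>{..<I}. gamma_star p i \<le> \<Gamma>0}"
  have "A \<subseteq> {..<I}" "{i \<in> {..<I}. \<Gamma>0 < gamma_star p i} = {..<I} - A"
    unfolding A_def by auto
  then have "I_star I p \<Gamma>0 = I - card A" "card A \<le> I"
    unfolding I_star_def by (auto simp: card_Diff_subset finite_subset dest: card_mono[rotated])
  then show ?thesis using assms unfolding covers_def A_def by blast
qed

lemma covers_complement_Sset:
  assumes "covers I g \<alpha> P" "g \<in> Gspace I"
  shows "g \<in> (\<Inter>(\<Gamma>0, k) \<in> {(\<Gamma>0, k). 1 \<le> \<Gamma>0 \<and> 1 \<le> k \<and> k \<le> I \<and> P \<Gamma>0 k \<le> \<alpha>}.
    Gspace I - Sset I \<Gamma>0 k)"
proof -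
  have "g \<notin> Sset I \<Gamma>0 k" if k: "1 \<le> \<Gamma>0" "1 \<le> k" "k \<le> I" "P \<Gamma>0 k \<le> \<alpha>" for \<Gamma>0 k
  proof
    assume "g \<in> Sset I \<Gamma>0 k"
    then have "card {i\<in>{..<I}. g i \<le> kth_smallest I g k} \<le> card {i\<in>{..<I}. g i \<le> \<Gamma>0}"
      by (intro card_mono) (auto simp: Sset_def)
    then have "k \<le> card {i\<in>{..<I}. g i \<le> \<Gamma>0}"
      using k_le_card_le_kth_smallest[of k I g] k by linarith
    then show False using assms(1) k unfolding covers_def by force
  qed
  then show ?thesis using assms(2) by auto
qed

theorem theoremA3:
  fixes I :: nat
    and p :: "nat \<Rightarrow> nat \<Rightarrow> real"
    and q :: "(nat \<Rightarrow> nat \<Rightarrow> real) \<Rightarrow> nat \<Rightarrow> nat \<Rightarrow> real"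
    and Y1 Y0 :: "nat \<Rightarrow> nat \<Rightarrow> real"
    and ord :: "(nat \<Rightarrow> nat \<Rightarrow> real) \<Rightarrow> nat \<Rightarrow> nat"
    and \<alpha> :: real
  assumes p_nonneg: "\<forall>i<I. \<forall>j<2. 0 \<le> p i j"
    and p_sum: "\<forall>i<I. p i 0 + p i 1 = 1"
    and Y1: "Y1 \<in> Vspace I" and Y0: "Y0 \<in> Vspace I"
    and bounded_null: "\<forall>i<I. \<forall>j<2. Y1 i j \<le> Y0 i j"
    and stat: "effect_increasing I q \<or> differential_increasing I q"
    and ord: "\<forall>qv. sorts_pairs I qv (ord qv)"
    and alpha: "0 < \<alpha>" "\<alpha> < 1"
  shows
    "(\<forall>k \<in> {1..I}.
        Prob I p (\<lambda>z. kth_smallest I (gamma_star p) k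
                        \<in> {\<Gamma>0. 1 \<le> \<Gamma>0 \<and> pbar_obs I q ord Y1 Y0 z \<Gamma>0 k > \<alpha>}) \<ge> 1 - \<alpha>)
     \<and> (\<forall>\<Gamma>0 \<ge> 1.
        Prob I p (\<lambda>z. I_star I p \<Gamma>0
                        \<in> {I - k | k. k \<le> I \<and> pbar_obs I q ord Y1 Y0 z \<Gamma>0 k > \<alpha>}) \<ge> 1 - \<alpha>)
     \<and> Prob I p (\<lambda>z. gamma_star p \<in>
          (\<Inter>(\<Gamma>0, k) \<in> {(\<Gamma>0, k). 1 \<le> \<Gamma>0 \<and> 1 \<le> k \<and> k \<le> I \<and> pbar_obs I q ord Y1 Y0 z \<Gamma>0 k \<le> \<alpha>}.
              Gspace I - Sset I \<Gamma>0 k)) \<ge> 1 - \<alpha>"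
proof -
  let ?covers = "\<lambda>z. covers I (gamma_star p) \<alpha> (pbar_obs I q ord Y1 Y0 z)"
  have whp: "1 - \<alpha> \<le> Prob I p ?covers"
    using alpha by (intro Prob_covers_pbar_obs[OF p_nonneg p_sum Y1 Y0 bounded_null stat ord]) simp
  have gamma: "\<forall>i<I. 1 \<le> gamma_star p i"
    using p_nonneg by (auto intro: one_le_gamma_star)
  then have "gamma_star p \<in> Gspace I" by (simp add: Gspace_def)
  with gamma show ?thesis
    using order.trans[OF whp Prob_mono[OF p_nonneg]]
      covers_kth_smallest covers_I_star covers_complement_Sset by (simp add: Ball_def)
qed

end
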